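(* Let $G=(V,E)$ be a finite simple graph and let $\mathcal{F}$ be a (possibly empty) collection of minimal forts of $G$. Consider the integer program $\mathrm{MFF}(G,\mathcal{F})$: $$\text{minimize }\sum_{v\in V}x_v\ \text{ subject to }\ \sum_{v\in V}x_v\geq1,\quad x_u-x_v+\sum_{w\in N(u)\setminus\{v\}}x_w\geq0\ \ \forall v\in V,\ u\in N(v),\quad \sum_{v\in F}x_v\leq|F|-1\ \ \forall F\in\mathcal{F},\quad x\in\{0,1\}^V.$$ Suppose $\mathrm{MFF}(G,\mathcal{F})$ is feasible, let $x$ be an optimal solution, and let $F'=\{v\in V\colon x_v=1\}$. Then $\mathcal{F}\cup\{F'\}$ is a collection of minimal forts of $G$.
   Context: $N(u)$ denotes the neighborhood of $u$. A fort of $G$ is a non-empty set $F\subseteq V$ such that no vertex $u\in V\setminus F$ has exactly one neighbor in $F$. A fort is minimal if no fort of $G$ is a proper subset of it. *)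

theory Defs
  imports Main
begin

definition simple_graph :: "'a set \<Rightarrow> ('a \<Rightarrow> 'a \<Rightarrow> bool) \<Rightarrow> bool" where
  "simple_graph V E \<longleftrightarrow> finite V \<and> (\<forall>u v. E u v \<longrightarrow> E v u)
     \<and> (\<forall>u. \<not> E u u) \<and> (\<forall>u v. E u v \<longrightarrow> u \<in> V \<and> v \<in> V)"

definition nbhd :: "'a set \<Rightarrow> ('a \<Rightarrow> 'a \<Rightarrow> bool) \<Rightarrow> 'a \<Rightarrow> 'a set" where
  "nbhd V E u = {w \<in> V. E u w}"

definition is_fort :: "'a set \<Rightarrow> ('a \<Rightarrow> 'a \<Rightarrow> bool) \<Rightarrow> 'a set \<Rightarrow> bool" where
  "is_fort V E F \<longleftrightarrow> F \<noteq> {} \<and> F \<subseteq> V \<and>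
     (\<forall>u \<in> V - F. card (nbhd V E u \<inter> F) \<noteq> 1)"

definition is_minimal_fort :: "'a set \<Rightarrow> ('a \<Rightarrow> 'a \<Rightarrow> bool) \<Rightarrow> 'a set \<Rightarrow> bool" where
  "is_minimal_fort V E F \<longleftrightarrow> is_fort V E F \<and> (\<forall>F'. is_fort V E F' \<longrightarrow> \<not> F' \<subset> F)"

definition mff_feasible :: "'a set \<Rightarrow> ('a \<Rightarrow> 'a \<Rightarrow> bool) \<Rightarrow> 'a set set \<Rightarrow> ('a \<Rightarrow> int) \<Rightarrow> bool" where
  "mff_feasible V E FF x \<longleftrightarrow>
     (\<forall>v \<in> V. x v \<in> {0, 1}) \<and>
     (\<Sum>v\<in>V. x v) \<ge> 1 \<and>
     (\<forall>v \<in> V. \<forall>u \<in> nbhd V E v. x u - x v + (\<Sum>w \<in> nbhd V E u - {v}. x w) \<ge> 0) \<and>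
     (\<forall>F \<in> FF. (\<Sum>v\<in>F. x v) \<le> int (card F) - 1)"

definition mff_optimal :: "'a set \<Rightarrow> ('a \<Rightarrow> 'a \<Rightarrow> bool) \<Rightarrow> 'a set set \<Rightarrow> ('a \<Rightarrow> int) \<Rightarrow> bool" where
  "mff_optimal V E FF x \<longleftrightarrow> mff_feasible V E FF x \<and>
     (\<forall>y. mff_feasible V E FF y \<longrightarrow> (\<Sum>v\<in>V. x v) \<le> (\<Sum>v\<in>V. y v))"

end

theory Submission
  imports Defs
begin

text \<open>The feasible points of MFF(G, FF) are exactly the 0/1 indicator vectors of forts that
  contain no member of FF: the neighbourhood constraints say that a vertex outside the support
  never sees exactly one support vertex, and the FF constraints say that no member of FF lies
  inside the support. An optimal point is therefore the indicator of a smallest such fort S.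
  A fort properly inside S contains no member of FF either, so its indicator would be a cheaper
  feasible point; hence S is a minimal fort.\<close>

lemma sum_zero_one_eq_card:
  fixes x :: "'a \<Rightarrow> 'b :: semiring_1"
  assumes "finite A" and "\<forall>v \<in> A. x v \<in> {0, 1}"
  shows "(\<Sum>v\<in>A. x v) = of_nat (card {v \<in> A. x v = 1})"
proof -
  have "(\<Sum>v\<in>A. x v) = (\<Sum>v\<in>A. of_bool (x v = 1))"
    using assms(2) by (intro sum.cong) auto
  also have "\<dots> = of_nat (card {v \<in> A. x v = 1})"
    using assms(1) by (simp add: Int_def)
  finally show ?thesis .
qed

lemma simple_graph_finite_nbhd:
  assumes "simple_graph V E"
  shows "finite (nbhd V E u)"
  using assms by (auto simp: simple_graph_def nbhd_def)

lemma simple_graph_nbhd_sym: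
  assumes "simple_graph V E" and "v \<in> V" and "u \<in> nbhd V E v"
  shows "v \<in> nbhd V E u"
  using assms by (auto simp: simple_graph_def nbhd_def)

lemma feasible_support_is_fort:
  assumes G: "simple_graph V E" and feasible: "mff_feasible V E FF x"
  shows "is_fort V E {v \<in> V. x v = 1}"
proof -
  let ?S = "{v \<in> V. x v = 1}"
  have "finite V" using G by (simp add: simple_graph_def)
  have zero_one: "\<forall>v \<in> V. x v \<in> {0, 1}"
    using feasible by (simp add: mff_feasible_def)
  have "int (card ?S) \<ge> 1"
    using feasible sum_zero_one_eq_card[OF \<open>finite V\<close> zero_one] by (simp add: mff_feasible_def)
  then have "card ?S > 0" by linarith
  then have "?S \<noteq> {}" using card_gt_0_iff by blast
  moreover have "card (nbhd V E u \<inter> ?S) \<noteq> 1" if u: "u \<in> V - ?S" for u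
  proof
    assume "card (nbhd V E u \<inter> ?S) = 1"
    then obtain v where v: "nbhd V E u \<inter> ?S = {v}" by (auto simp: card_1_singleton_iff)
    then have "v \<in> V" "x v = 1" "u \<in> nbhd V E v"
      using u simple_graph_nbhd_sym[OF G] by (auto simp: nbhd_def)
    have "x u = 0" using u zero_one by auto
    have "(\<Sum>w \<in> nbhd V E u - {v}. x w) = int (card {w \<in> nbhd V E u - {v}. x w = 1})"
      using zero_one simple_graph_finite_nbhd[OF G]
      by (intro sum_zero_one_eq_card) (auto simp: nbhd_def)
    also have "{w \<in> nbhd V E u - {v}. x w = 1} = {}" using v by (auto simp: nbhd_def)
    finally have "(\<Sum>w \<in> nbhd V E u - {v}. x w) = 0" by simp
    moreover have "x u - x v + (\<Sum>w \<in> nbhd V E u - {v}. x w) \<ge> 0"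
      using feasible \<open>v \<in> V\<close> \<open>u \<in> nbhd V E v\<close> by (simp add: mff_feasible_def)
    ultimately show False using \<open>x u = 0\<close> \<open>x v = 1\<close> by simp
  qed
  ultimately show ?thesis by (auto simp: is_fort_def)
qed

lemma feasible_support_contains_no_member:
  assumes "mff_feasible V E FF x" and "F \<in> FF"
  shows "\<not> F \<subseteq> {v \<in> V. x v = 1}"
proof
  assume "F \<subseteq> {v \<in> V. x v = 1}"
  then have "(\<Sum>v\<in>F. x v) = (\<Sum>v\<in>F. 1)" by (intro sum.cong) auto
  moreover have "(\<Sum>v\<in>F. x v) \<le> int (card F) - 1"
    using assms by (simp add: mff_feasible_def)
  ultimately show False by simp
qed

lemma fort_indicator_feasible:
  assumes G: "simple_graph V E" and T: "is_fort V E T"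
    and FF: "\<forall>F \<in> FF. F \<subseteq> V \<and> \<not> F \<subseteq> T"
  shows "mff_feasible V E FF (\<lambda>v. of_bool (v \<in> T))"
proof -
  have "finite V" using G by (simp add: simple_graph_def)
  have "T \<subseteq> V" "T \<noteq> {}" using T by (auto simp: is_fort_def)
  then have "card T \<ge> 1" using \<open>finite V\<close> by (meson card_0_eq finite_subset less_one not_le)
  then have objective: "(\<Sum>v\<in>V. of_bool (v \<in> T)) \<ge> (1::int)"
    using \<open>finite V\<close> \<open>T \<subseteq> V\<close> by (simp add: Int_absorb1)
  have neighbour: "of_bool (u \<in> T) - of_bool (v \<in> T)
      + (\<Sum>w \<in> nbhd V E u - {v}. of_bool (w \<in> T)) \<ge> (0::int)"
    if "v \<in> V" "u \<in> nbhd V E v" for u v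
  proof (cases "v \<in> T \<and> u \<notin> T")
    case True
    have "u \<in> V" using that by (simp add: nbhd_def)
    have v: "v \<in> nbhd V E u \<inter> T"
      using True simple_graph_nbhd_sym[OF G that] by blast
    have "card (nbhd V E u \<inter> T) \<noteq> 1" using T \<open>u \<in> V\<close> True by (simp add: is_fort_def)
    moreover have "card (nbhd V E u \<inter> T) \<noteq> 0"
      using v simple_graph_finite_nbhd[OF G] by (metis card_0_eq empty_iff finite_Int)
    ultimately have "card (nbhd V E u \<inter> T) \<ge> 2" by linarith
    then have "card (nbhd V E u \<inter> T - {v}) \<ge> 1"
      using v simple_graph_finite_nbhd[OF G] by (simp add: card_Diff_singleton)
    moreover have "(nbhd V E u - {v}) \<inter> T = nbhd V E u \<inter> T - {v}" by blast
    ultimately have "card ((nbhd V E u - {v}) \<inter> T) \<ge> 1" by simp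
    then show ?thesis using True simple_graph_finite_nbhd[OF G] by simp
  next
    case False
    then show ?thesis using simple_graph_finite_nbhd[OF G] by auto
  qed
  have members: "(\<Sum>v\<in>F. of_bool (v \<in> T)) \<le> int (card F) - 1" if "F \<in> FF" for F
  proof -
    have "finite F" using FF that \<open>finite V\<close> finite_subset by blast
    moreover have "F \<inter> T \<subset> F" using FF that by blast
    ultimately have "card (F \<inter> T) < card F" by (rule psubset_card_mono)
    then show ?thesis using \<open>finite F\<close> by (simp add: Int_def)
  qed
  show ?thesis
    using objective neighbour members by (simp add: mff_feasible_def)
qed

lemma optimal_support_is_minimal_fort:
  assumes G: "simple_graph V E" and FF: "\<forall>F \<in> FF. F \<subseteq> V"
    and optimal: "mff_optimal V E FF x"
  shows "is_minimal_fort V E {v \<in> V. x v = 1}"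
proof -
  let ?S = "{v \<in> V. x v = 1}"
  have "finite V" using G by (simp add: simple_graph_def)
  have feasible: "mff_feasible V E FF x" using optimal by (simp add: mff_optimal_def)
  have "\<not> is_fort V E T" if "T \<subset> ?S" for T
  proof
    assume "is_fort V E T"
    moreover have "\<forall>F \<in> FF. F \<subseteq> V \<and> \<not> F \<subseteq> T"
      using FF feasible_support_contains_no_member[OF feasible] \<open>T \<subset> ?S\<close> by blast
    ultimately have "mff_feasible V E FF (\<lambda>v. of_bool (v \<in> T))"
      using fort_indicator_feasible[OF G] by blast
    moreover have "V \<inter> {v. v \<in> T} = T" using \<open>T \<subset> ?S\<close> by blast
    ultimately have "(\<Sum>v\<in>V. x v) \<le> int (card T)"
      using optimal \<open>finite V\<close> by (auto simp: mff_optimal_def)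
    moreover have "(\<Sum>v\<in>V. x v) = int (card ?S)"
      using feasible \<open>finite V\<close> by (simp add: sum_zero_one_eq_card mff_feasible_def)
    moreover have "card T < card ?S" using \<open>T \<subset> ?S\<close> \<open>finite V\<close> by (simp add: psubset_card_mono)
    ultimately show False by simp
  qed
  then show ?thesis
    using feasible_support_is_fort[OF G feasible] unfolding is_minimal_fort_def by blast
qed

theorem theorem6p2:
  fixes V :: "'a set" and E :: "'a \<Rightarrow> 'a \<Rightarrow> bool" and FF :: "'a set set"
    and x :: "'a \<Rightarrow> int"
  assumes "simple_graph V E"
    and "\<forall>F \<in> FF. is_minimal_fort V E F"
    and "\<exists>y. mff_feasible V E FF y"
    and "mff_optimal V E FF x"
  shows "\<forall>F \<in> FF \<union> {{v \<in> V. x v = 1}}. is_minimal_fort V E F"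
proof -
  have "\<forall>F \<in> FF. F \<subseteq> V"
    using assms(2) by (simp add: is_minimal_fort_def is_fort_def)
  then have "is_minimal_fort V E {v \<in> V. x v = 1}"
    using optimal_support_is_minimal_fort assms(1,4) by blast
  then show ?thesis using assms(2) by blast
qed

end
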